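(* Let $\alpha > 0$ and let $\mathcal{X} \subset \mathbb{R}^2$ be a finite set with no $\alpha$-isolated points. Then the vertices of the $\alpha$-shape of $\mathcal{X}$ and the vertices of the $\alpha$-convex hull of $\mathcal{X}$ coincide.
   Context: A point $x\in\mathcal{X}$ is $\alpha$-isolated if there is no other point of $\mathcal{X}$ within distance $2\alpha$ of $x$. A pair of distinct points $x,x'\in\mathcal{X}$ forms an $\alpha$-edge if there is an open ball $B$ of radius $\alpha$ with $x,x'\in\partial B$ and $B\cap\mathcal{X}=\emptyset$; the $\alpha$-shape of $\mathcal{X}$ is the union of the segments $[xx']$ over all $\alpha$-edges, and its vertices are the points of $\mathcal{X}$ that are endpoints of some $\alpha$-edge. The $\alpha$-convex hull $H$ of $\mathcal{X}$ is the smallest $\alpha$-convex set containing $\mathcal{X}$ (a set $T$ is $\alpha$-convex if for every $x\notin\bar T$ there is an open ball of radius $\alpha$ containing $x$ and disjoint from $\bar T$); equivalently $H=\bigcap_{B}(\mathbb{R}^2\setminus B)$ over all open balls $B$ of radius $\alpha$ with $B\cap\mathcal{X}=\emptyset$. Its vertices are the points of $\mathcal{X}$ lying on $\partial H$. *)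

theory Defs
  imports "HOL-Analysis.Analysis"
begin

definition alpha_isolated :: "real \<Rightarrow> (real^2) set \<Rightarrow> real^2 \<Rightarrow> bool" where
  "alpha_isolated \<alpha> X x \<longleftrightarrow> x \<in> X \<and> (\<forall>y\<in>X. y \<noteq> x \<longrightarrow> dist x y > 2 * \<alpha>)"

definition alpha_edge :: "real \<Rightarrow> (real^2) set \<Rightarrow> real^2 \<Rightarrow> real^2 \<Rightarrow> bool" where
  "alpha_edge \<alpha> X x x' \<longleftrightarrow> x \<in> X \<and> x' \<in> X \<and> x \<noteq> x' \<and>
     (\<exists>c. x \<in> sphere c \<alpha> \<and> x' \<in> sphere c \<alpha> \<and> ball c \<alpha> \<inter> X = {})"

definition alpha_shape :: "real \<Rightarrow> (real^2) set \<Rightarrow> (real^2) set" where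
  "alpha_shape \<alpha> X = (\<Union>{closed_segment x x' | x x'. alpha_edge \<alpha> X x x'})"

definition alpha_shape_vertices :: "real \<Rightarrow> (real^2) set \<Rightarrow> (real^2) set" where
  "alpha_shape_vertices \<alpha> X = {x \<in> X. \<exists>x'. alpha_edge \<alpha> X x x'}"

definition alpha_convex_hull :: "real \<Rightarrow> (real^2) set \<Rightarrow> (real^2) set" where
  "alpha_convex_hull \<alpha> X = \<Inter>{- ball c \<alpha> | c. ball c \<alpha> \<inter> X = {}}"

definition alpha_hull_vertices :: "real \<Rightarrow> (real^2) set \<Rightarrow> (real^2) set" where
  "alpha_hull_vertices \<alpha> X = {x \<in> X. x \<in> frontier (alpha_convex_hull \<alpha> X)}"

end

theory Submission
  imports Defs
begin

text \<open>A point x of X on the frontier of the hull lies on the boundary of some empty \<alpha>-ball. As x is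
not isolated, some other point of X lies within 2\<alpha> of x. Roll the empty ball around x: as long as
it touches no second point of X, the set of centres on the circle of radius \<alpha> about x whose balls
avoid X is both closed and (by finiteness of X) relatively open, hence the whole circle by
connectedness. But the circle contains a centre whose ball catches the nearby point, so the rolling
ball must touch a second point of X, which yields an \<alpha>-edge at x.\<close>

lemma ball_disjoint_iff_dist_ge: "ball c r \<inter> X = {} \<longleftrightarrow> (\<forall>y\<in>X. r \<le> dist c y)"
  unfolding disjoint_iff by (auto simp: not_less)

lemma closed_empty_ball_centres: "closed {c. ball c r \<inter> X = {}}"
proof -
  have "{c. ball c r \<inter> X = {}} = (\<Inter>y\<in>X. - ball y r)"
    by (auto simp: ball_disjoint_iff_dist_ge dist_commute not_less)
  then show ?thesis
    by (auto intro!: closed_INT)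
qed

lemma sphere_inter_cball_nonempty:
  fixes x y :: "'a::real_normed_vector"
  assumes "x \<noteq> y" "dist x y \<le> 2 * r"
  shows "sphere x r \<inter> cball y r \<noteq> {}"
proof -
  define n where "n = dist x y"
  have n: "0 < n" "n \<le> 2 * r"
    using assms by (auto simp: n_def)
  then have "0 < r"
    by linarith
  define c where "c = x + (r / n) *\<^sub>R (y - x)"
  have "dist x c = r"
    using n \<open>0 < r\<close> by (simp add: c_def dist_norm n_def norm_minus_commute)
  have "c - y = (r / n - 1) *\<^sub>R (y - x)"
    by (simp add: c_def algebra_simps)
  then have "dist c y = \<bar>r / n - 1\<bar> * n"
    by (simp add: dist_norm n_def norm_minus_commute)
  also have "\<dots> = \<bar>r - n\<bar>"
    using n by (simp add: abs_mult[symmetric] field_simps)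
  finally have "dist y c = \<bar>r - n\<bar>"
    by (simp add: dist_commute)
  with \<open>dist x c = r\<close> n show ?thesis
    by (auto simp: abs_le_iff)
qed

lemma empty_ball_rolls_to_second_point:
  fixes X :: "'a::euclidean_space set"
  assumes "2 \<le> DIM('a)" "finite X" "x \<in> X"
    and "y0 \<in> X" "y0 \<noteq> x" "dist x y0 \<le> 2 * r"
    and "dist x c0 = r" "ball c0 r \<inter> X = {}"
  shows "\<exists>y c. y \<in> X \<and> y \<noteq> x \<and> dist x c = r \<and> dist y c = r \<and> ball c r \<inter> X = {}"
proof (rule ccontr)
  assume untouched: "\<not> ?thesis"
  define S where "S = {c \<in> sphere x r. ball c r \<inter> X = {}}"
  define U where "U = (\<Inter>y\<in>X - {x}. - cball y r)"
  have far: "r < dist y c" if "c \<in> S" "y \<in> X" "y \<noteq> x" for c y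
  proof -
    have c: "dist x c = r" "ball c r \<inter> X = {}"
      using that(1) by (auto simp: S_def)
    then have "r \<le> dist c y"
      using that(2) by (simp add: ball_disjoint_iff_dist_ge)
    moreover have "dist y c \<noteq> r"
      using untouched that(2,3) c by blast
    ultimately show ?thesis
      by (simp add: dist_commute)
  qed
  \<comment> \<open>on the circle, avoiding the open ball only depends on the finitely many points other than x\<close>
  have "S = sphere x r \<inter> U"
  proof (intro set_eqI iffI)
    fix c assume c: "c \<in> S"
    then have "c \<in> - cball y r" if "y \<in> X - {x}" for y
      using far[of c y] that by simp
    with c show "c \<in> sphere x r \<inter> U"
      unfolding S_def U_def by blast
  next
    fix c assume c: "c \<in> sphere x r \<inter> U"
    have "r \<le> dist y c" if "y \<in> X" for y
    proof (cases "y = x")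
      case False
      with c that have "c \<in> - cball y r"
        unfolding U_def by blast
      then show ?thesis
        by simp
    qed (use c in simp)
    with c show "c \<in> S"
      by (simp add: S_def ball_disjoint_iff_dist_ge dist_commute)
  qed
  moreover have "open U"
    using assms(2) by (auto simp: U_def intro!: open_INT)
  ultimately have "openin (top_of_set (sphere x r)) S"
    by (simp add: openin_open_Int)
  moreover have "closedin (top_of_set (sphere x r)) S"
  proof -
    have "S = sphere x r \<inter> {c. ball c r \<inter> X = {}}"
      by (auto simp: S_def)
    then show ?thesis
      by (simp add: closedin_closed_Int closed_empty_ball_centres)
  qed
  moreover have "c0 \<in> S"
    using assms(7,8) by (simp add: S_def)
  ultimately have "S = sphere x r"
    using connected_sphere[OF assms(1)] unfolding connected_clopen by blast
  moreover obtain c where "c \<in> sphere x r" "c \<in> cball y0 r"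
    using sphere_inter_cball_nonempty[of x y0 r] assms(5,6) by blast
  ultimately show False
    using far[of c y0] assms(4,5) by simp
qed

lemma alpha_convex_hull_superset: "X \<subseteq> alpha_convex_hull r X"
  unfolding alpha_convex_hull_def by auto

lemma frontier_alpha_convex_hullI:
  assumes "r > 0" "x \<in> X" "dist c x = r" "ball c r \<inter> X = {}"
  shows "x \<in> frontier (alpha_convex_hull r X)"
proof -
  have "ball c r \<subseteq> - alpha_convex_hull r X"
    using assms(4) unfolding alpha_convex_hull_def by auto
  moreover have "x \<in> closure (ball c r)"
    using assms by (simp add: closure_ball)
  ultimately have "x \<in> closure (- alpha_convex_hull r X)"
    using closure_mono by blast
  moreover have "x \<in> closure (alpha_convex_hull r X)"
    using alpha_convex_hull_superset assms(2) closure_subset by blast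
  ultimately show ?thesis
    by (simp add: frontier_def interior_closure)
qed

lemma empty_ball_through_frontier_point:
  assumes "x \<in> X" "x \<notin> interior (alpha_convex_hull r X)"
  shows "\<exists>c. dist x c = r \<and> ball c r \<inter> X = {}"
proof -
  define C where "C = {c. ball c r \<inter> X = {}}"
  have near: "\<exists>c\<in>C. dist x c < r + e" if "e > 0" for e
  proof -
    have "\<not> ball x e \<subseteq> alpha_convex_hull r X"
      using assms(2) that unfolding mem_interior by blast
    then obtain z where "z \<in> ball x e" "z \<notin> alpha_convex_hull r X"
      by blast
    then obtain c where "c \<in> C" "z \<in> ball c r"
      unfolding alpha_convex_hull_def C_def by auto
    moreover have "dist x c \<le> dist x z + dist c z"
      by (rule dist_triangle2)
    ultimately show ?thesis
      using \<open>z \<in> ball x e\<close> by force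
  qed
  have "closed C" "C \<noteq> {}"
    using closed_empty_ball_centres near[of 1] by (auto simp: C_def)
  then obtain c where c: "c \<in> C" "\<And>d. d \<in> C \<Longrightarrow> dist x c \<le> dist x d"
    using distance_attains_inf by blast
  have "r \<le> dist c x"
    using c(1) assms(1) by (simp add: C_def ball_disjoint_iff_dist_ge)
  moreover have "dist x c \<le> r"
  proof (rule ccontr)
    assume "\<not> dist x c \<le> r"
    then obtain d where "d \<in> C" "dist x d < dist x c"
      using near[of "dist x c - r"] by auto
    with c(2) show False
      by fastforce
  qed
  ultimately show ?thesis
    using c(1) by (auto simp: C_def dist_commute)
qed

theorem proposition2:
  fixes \<alpha> :: real and X :: "(real^2) set"
  assumes "\<alpha> > 0" and "finite X"
    and "\<forall>x\<in>X. \<not> alpha_isolated \<alpha> X x"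
  shows "alpha_shape_vertices \<alpha> X = alpha_hull_vertices \<alpha> X"
proof
  show "alpha_shape_vertices \<alpha> X \<subseteq> alpha_hull_vertices \<alpha> X"
    using frontier_alpha_convex_hullI[OF assms(1)]
    by (auto simp: alpha_shape_vertices_def alpha_hull_vertices_def alpha_edge_def)
next
  show "alpha_hull_vertices \<alpha> X \<subseteq> alpha_shape_vertices \<alpha> X"
  proof
    fix x assume "x \<in> alpha_hull_vertices \<alpha> X"
    then have x: "x \<in> X" "x \<notin> interior (alpha_convex_hull \<alpha> X)"
      by (auto simp: alpha_hull_vertices_def frontier_def)
    obtain c0 where "dist x c0 = \<alpha>" "ball c0 \<alpha> \<inter> X = {}"
      using empty_ball_through_frontier_point[OF x] by blast
    moreover obtain y0 where "y0 \<in> X" "y0 \<noteq> x" "dist x y0 \<le> 2 * \<alpha>"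
      using assms(3) x(1) by (force simp: alpha_isolated_def)
    moreover have "2 \<le> DIM(real^2)"
      by simp
    ultimately obtain y c where "y \<in> X" "y \<noteq> x" "dist x c = \<alpha>" "dist y c = \<alpha>"
        "ball c \<alpha> \<inter> X = {}"
      using empty_ball_rolls_to_second_point[OF _ assms(2) x(1)] by blast
    then have "alpha_edge \<alpha> X x y"
      using x(1) by (auto simp: alpha_edge_def dist_commute)
    with x(1) show "x \<in> alpha_shape_vertices \<alpha> X"
      by (auto simp: alpha_shape_vertices_def)
  qed
qed

end
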